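(* Let $\mathcal{G}=(\mathcal{V},\mathcal{E})$ be an undirected graph with $n$ nodes, $m$ edges and adjacency matrix $\mathbf{A}\in\{0,1\}^{n\times n}$. Let $\hat{\mathbf{A}}=\mathbf{A}+\mathbf{I}$, let $\hat{\mathbf{D}}$ be the diagonal matrix with $\hat{\mathbf{D}}_{ii}=\sum_j\hat{\mathbf{A}}_{ij}$, let $\tilde{\mathbf{A}}=\hat{\mathbf{D}}^{-1/2}\hat{\mathbf{A}}\hat{\mathbf{D}}^{-1/2}$ and $\tilde{\mathbf{L}}=\mathbf{I}-\tilde{\mathbf{A}}$. Let $\Delta\in\{-1,0,1\}^{m\times n}$ be an oriented incidence matrix of $\mathcal{G}$ (for the $\ell$-th edge $e_\ell=(i,j)$, the $\ell$-th row of $\Delta$ has $-1$ in column $i$, $+1$ in column $j$, and $0$ elsewhere, with arbitrary orientation), and let $\tilde{\Delta}=\Delta\hat{\mathbf{D}}^{-1/2}$. Fix $\mathbf{X}_{\mathrm{in}}\in\mathbb{R}^{n\times d}$ and $\lambda_1,\lambda_2\ge 0$, and let $$f(\mathbf{F})=\frac{\lambda_2}{2}\operatorname{tr}(\mathbf{F}^\top\tilde{\mathbf{L}}\mathbf{F})+\frac12\|\mathbf{F}-\mathbf{X}_{\mathrm{in}}\|_F^2 .$$ Consider the two problems $$\text{(Option I)}\quad \min_{\mathbf{F}\in\mathbb{R}^{n\times d}} \lambda_1\|\tilde{\Delta}\mathbf{F}\|_1+f(\mathbf{F}),\qquad \text{(Option II)}\quad \min_{\mathbf{F}\in\mathbb{R}^{n\times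 d}} \lambda_1\|\tilde{\Delta}\mathbf{F}\|_{21}+f(\mathbf{F}),$$ where $\|\mathbf{X}\|_1=\sum_{ij}|\mathbf{X}_{ij}|$ and $\|\mathbf{X}\|_{21}=\sum_i\|\mathbf{X}_i\|_2$ ($\mathbf{X}_i$ the $i$-th row). Let $\gamma,\beta>0$ and define the elastic message passing iteration, starting from $\mathbf{F}^0=\mathbf{X}_{\mathrm{in}}$ and $\mathbf{Z}^0=\mathbf{0}\in\mathbb{R}^{m\times d}$, by $$\mathbf{Y}^{k}=\mathbf{F}^k-\gamma\nabla f(\mathbf{F}^k)=\big((1-\gamma)\mathbf{I}-\gamma\lambda_2\tilde{\mathbf{L}}\big)\mathbf{F}^k+\gamma\mathbf{X}_{\mathrm{in}},$$ $$\bar{\mathbf{F}}^{k+1}=\mathbf{Y}^k-\gamma\tilde{\Delta}^\top\mathbf{Z}^k,\qquad \bar{\mathbf{Z}}^{k+1}=\mathbf{Z}^k+\beta\tilde{\Delta}\bar{\mathbf{F}}^{k+1},$$ $$\mathbf{Z}^{k+1}=\begin{cases}\text{(Option I)}\ \ \mathbf{Z}^{k+1}_{ij}=\operatorname{sign}(\bar{\mathbf{Z}}^{k+1}_{ij})\min(|\bar{\mathbf{Z}}^{k+1}_{ij}|,\lambda_1)\ \text{for all } i,j,\\[2pt] \text{(Option II)}\ \ \mathbf{Z}^{k+1}_i=\min(\|\bar{\mathbf{Z}}^{k+1}_i\|_2,\lambda_1)\,\dfrac{\bar{\mathbf{Z}}^{k+1}_i}{\|\bar{\mathbf{Z}}^{k+1}_i\|_2}\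 \text{for all } i\in[m]\ (\text{taken as }\mathbf{0}\text{ if }\bar{\mathbf{Z}}^{k+1}_i=\mathbf{0}),\end{cases}$$ $$\mathbf{F}^{k+1}=\mathbf{Y}^k-\gamma\tilde{\Delta}^\top\mathbf{Z}^{k+1}.$$ If $\gamma<\frac{2}{1+\lambda_2\|\tilde{\mathbf{L}}\|_2}$ and $\beta\le\frac{4}{3\gamma\|\tilde{\Delta}\tilde{\Delta}^\top\|_2}$, then $\mathbf{F}^k$ converges to the optimal solution of the Option I problem (when Option I is used in the iteration) or of the Option II problem (when Option II is used). Moreover, $\|\tilde{\mathbf{L}}\|_2=\|\tilde{\Delta}^\top\tilde{\Delta}\|_2=\|\tilde{\Delta}\tilde{\Delta}^\top\|_2\le 2$, so it is sufficient to choose any $\gamma<\frac{2}{1+2\lambda_2}$ and $\beta\le\frac{2}{3\gamma}$.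
   Context: $\|\cdot\|_2$ of a matrix denotes its largest singular value; $\|\cdot\|_F$ is the Frobenius norm. With the specific choice $\gamma=1/(1+\lambda_2)$ the step $\mathbf{Y}^k$ simplifies to $\gamma\mathbf{X}_{\mathrm{in}}+(1-\gamma)\tilde{\mathbf{A}}\mathbf{F}^k$, which is the form used in the paper's figure defining the scheme. *)

theory Defs
  imports "HOL-Analysis.Analysis"
begin

text \<open>Matrices are HOL-Analysis vectors of vectors: a matrix in R^{p x q} is
  real^'q^'p (rows indexed by 'p). Node index type 'n, edge index type 'm,
  feature index type 'd. The Euclidean norm on real^'d^'n is the Frobenius norm.\<close>

definition spec_norm :: "real^'q^'p \<Rightarrow> real" where
  "spec_norm M = onorm (\<lambda>x. M *v x)"

definition diag_mat :: "('n \<Rightarrow> real) \<Rightarrow> real^'n^'n" where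
  "diag_mat v = (\<chi> i j. if i = j then v i else 0)"

definition undirected_adj :: "real^'n^'n \<Rightarrow> bool" where
  "undirected_adj A \<longleftrightarrow> (\<forall>i j. A$i$j = 0 \<or> A$i$j = 1) \<and> (\<forall>i j. A$i$j = A$j$i) \<and> (\<forall>i. A$i$i = 0)"

definition oriented_incidence :: "real^'n^'n \<Rightarrow> real^'n^'m \<Rightarrow> bool" where
  "oriented_incidence A Delta \<longleftrightarrow>
     (\<exists>src tgt :: 'm \<Rightarrow> 'n.
        bij_betw (\<lambda>l. {src l, tgt l}) UNIV {{i, j} | i j. A$i$j = 1} \<and>
        (\<forall>l c. Delta$l$c = (if c = src l then -1 else if c = tgt l then 1 else 0)))"

definition Ahat :: "real^'n^'n \<Rightarrow> real^'n^'n" where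
  "Ahat A = A + mat 1"

definition Dhat_inv_sqrt :: "real^'n^'n \<Rightarrow> real^'n^'n" where
  "Dhat_inv_sqrt A = diag_mat (\<lambda>i. 1 / sqrt (\<Sum>j\<in>UNIV. Ahat A $ i $ j))"

definition Atilde :: "real^'n^'n \<Rightarrow> real^'n^'n" where
  "Atilde A = Dhat_inv_sqrt A ** Ahat A ** Dhat_inv_sqrt A"

definition Ltilde :: "real^'n^'n \<Rightarrow> real^'n^'n" where
  "Ltilde A = mat 1 - Atilde A"

definition Deltatilde :: "real^'n^'n \<Rightarrow> real^'n^'m \<Rightarrow> real^'n^'m" where
  "Deltatilde A Delta = Delta ** Dhat_inv_sqrt A"

definition l1_norm :: "real^'q^'p \<Rightarrow> real" where
  "l1_norm M = (\<Sum>i\<in>UNIV. \<Sum>j\<in>UNIV. \<bar>M$i$j\<bar>)"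

definition l21_norm :: "real^'q^'p \<Rightarrow> real" where
  "l21_norm M = (\<Sum>i\<in>UNIV. norm (M$i))"

definition smooth_part :: "real^'n^'n \<Rightarrow> real^'d^'n \<Rightarrow> real \<Rightarrow> real^'d^'n \<Rightarrow> real" where
  "smooth_part A Xin lam2 F =
     lam2 / 2 * trace (transpose F ** Ltilde A ** F) + 1/2 * (norm (F - Xin))^2"

definition obj_I :: "real^'n^'n \<Rightarrow> real^'n^'m \<Rightarrow> real^'d^'n \<Rightarrow> real \<Rightarrow> real \<Rightarrow> real^'d^'n \<Rightarrow> real" where
  "obj_I A Delta Xin lam1 lam2 F =
     lam1 * l1_norm (Deltatilde A Delta ** F) + smooth_part A Xin lam2 F"

definition obj_II :: "real^'n^'n \<Rightarrow> real^'n^'m \<Rightarrow> real^'d^'n \<Rightarrow> real \<Rightarrow> real \<Rightarrow> real^'d^'n \<Rightarrow> real" where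
  "obj_II A Delta Xin lam1 lam2 F =
     lam1 * l21_norm (Deltatilde A Delta ** F) + smooth_part A Xin lam2 F"

definition clip_I :: "real \<Rightarrow> real^'d^'m \<Rightarrow> real^'d^'m" where
  "clip_I lam1 Z = (\<chi> i j. sgn (Z$i$j) * min \<bar>Z$i$j\<bar> lam1)"

definition clip_II :: "real \<Rightarrow> real^'d^'m \<Rightarrow> real^'d^'m" where
  "clip_II lam1 Z = (\<chi> i. if Z$i = 0 then 0 else (min (norm (Z$i)) lam1 / norm (Z$i)) *\<^sub>R Z$i)"

fun emp :: "(real^'d^'m \<Rightarrow> real^'d^'m) \<Rightarrow> real^'n^'n \<Rightarrow> real^'n^'m \<Rightarrow> real^'d^'n
      \<Rightarrow> real \<Rightarrow> real \<Rightarrow> real \<Rightarrow> nat \<Rightarrow> (real^'d^'n) \<times> (real^'d^'m)" where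
  "emp P A Delta Xin lam2 gam bet 0 = (Xin, 0)"
| "emp P A Delta Xin lam2 gam bet (Suc k) =
     (let (F, Z) = emp P A Delta Xin lam2 gam bet k;
          Dt = Deltatilde A Delta;
          Y = ((1 - gam) *\<^sub>R mat 1 - (gam * lam2) *\<^sub>R Ltilde A) ** F + gam *\<^sub>R Xin;
          Fb = Y - gam *\<^sub>R (transpose Dt ** Z);
          Zb = Z + bet *\<^sub>R (Dt ** Fb);
          Z' = P Zb
      in (Y - gam *\<^sub>R (transpose Dt ** Z'), Z'))"

text \<open>F converges to the (unique) minimiser of obj: a minimiser exists and every
  minimiser is the limit.\<close>
definition converges_to_opt :: "(nat \<Rightarrow> 'a::topological_space) \<Rightarrow> ('a \<Rightarrow> real) \<Rightarrow> bool" where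
  "converges_to_opt Fs obj \<longleftrightarrow>
     (\<exists>Fo. \<forall>F. obj Fo \<le> obj F) \<and> (\<forall>Fo. (\<forall>F. obj Fo \<le> obj F) \<longrightarrow> Fs \<longlonglongrightarrow> Fo)"

end

(*
  The iteration is a primal-dual fixed-point scheme for  min_F G (D F) + f F,  where D is the
  normalised incidence matrix, f the smooth part and G the support function of a compact convex
  set S of dual variables (a box for the l1-norm, a product of balls for the l21-norm) whose
  Euclidean projection is the clipping step.  Since Ltilde = D^T D, the Hessian
  Q = I + lam2 D^T D of f satisfies I <= Q <= (1 + lam2 |D|^2) I.

  A saddle point (Fo, Zo) exists by Brouwer's theorem applied to the dual map, and the objective
  grows quadratically away from Fo, so Fo is its unique minimiser.  Along the iteration the energy
    beta/gam |F - Fo|^2 + |Z - Zo|^2 - gam beta/2 |D^T (Z - Zo)|^2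
  is nonnegative (as gam beta |D|^2 <= 4/3) and drops by at least
  beta (2 - gam (1 + lam2 |D|^2)) |F - Fo|^2 per step, by cocoercivity of Q and firm
  nonexpansiveness of the projection; hence F^k -> Fo.  Finally |D|^2 <= 2 because
  <x, Atilde x> >= -|x|^2.
*)
theory Submission
  imports Defs
begin

section \<open>Operator norms and adjoints\<close>

lemma onorm_adjoint_le:
  fixes f :: "'a::euclidean_space \<Rightarrow> 'b::euclidean_space"
  assumes "linear f"
  shows "onorm (adjoint f) \<le> onorm f"
proof (rule onorm_le)
  fix y
  have bl: "bounded_linear f" using assms by (rule linear_conv_bounded_linear[THEN iffD1])
  have "(norm (adjoint f y))\<^sup>2 = inner (f (adjoint f y)) y"
    by (simp add: adjoint_works[OF assms, symmetric] power2_norm_eq_inner)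
  also have "\<dots> \<le> norm (f (adjoint f y)) * norm y"
    by (rule norm_cauchy_schwarz)
  also have "\<dots> \<le> onorm f * norm (adjoint f y) * norm y"
    by (intro mult_right_mono onorm[OF bl]) simp
  finally show "norm (adjoint f y) \<le> onorm f * norm y"
    by (cases "adjoint f y = 0") (auto simp: power2_eq_square onorm_pos_le[OF bl] mult_ac)
qed

lemma onorm_adjoint:
  fixes f :: "'a::euclidean_space \<Rightarrow> 'b::euclidean_space"
  assumes "linear f"
  shows "onorm (adjoint f) = onorm f"
  using onorm_adjoint_le[OF assms] onorm_adjoint_le[OF adjoint_linear[OF assms]]
  by (simp add: adjoint_adjoint[OF assms])

lemma onorm_adjoint_compose_self:
  fixes f :: "'a::euclidean_space \<Rightarrow> 'b::euclidean_space"
  assumes "linear f"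
  shows "onorm (\<lambda>x. adjoint f (f x)) = (onorm f)\<^sup>2"
proof (rule antisym)
  have bl: "bounded_linear f" and bl': "bounded_linear (adjoint f)"
    using assms adjoint_linear[OF assms] by (simp_all add: linear_conv_bounded_linear)
  have blc: "bounded_linear (\<lambda>x. adjoint f (f x))"
    using bounded_linear_compose[OF bl' bl] .
  show "onorm (\<lambda>x. adjoint f (f x)) \<le> (onorm f)\<^sup>2"
    using onorm_compose[OF bl' bl] by (simp add: o_def onorm_adjoint[OF assms] power2_eq_square)
  let ?c = "onorm (\<lambda>x. adjoint f (f x))"
  have "onorm f \<le> sqrt ?c"
  proof (rule onorm_le)
    fix x
    have "(norm (f x))\<^sup>2 = inner x (adjoint f (f x))"
      by (simp add: adjoint_works[OF assms] power2_norm_eq_inner)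
    also have "\<dots> \<le> norm x * norm (adjoint f (f x))"
      by (rule norm_cauchy_schwarz)
    also have "\<dots> \<le> norm x * (?c * norm x)"
      by (intro mult_left_mono onorm[OF blc]) simp
    finally have "(norm (f x))\<^sup>2 \<le> (sqrt ?c * norm x)\<^sup>2"
      using onorm_pos_le[OF blc] by (simp add: power_mult_distrib power2_eq_square mult_ac)
    then show "norm (f x) \<le> sqrt ?c * norm x"
      using onorm_pos_le[OF blc] by (auto intro: power2_le_imp_le)
  qed
  from power_mono[OF this onorm_pos_le[OF bl], of 2]
  show "(onorm f)\<^sup>2 \<le> ?c"
    using onorm_pos_le[OF blc] by simp
qed

lemma spec_norm_nonneg: "0 \<le> spec_norm (M :: real^'q^'p)"
  unfolding spec_norm_def by (rule onorm_pos_le) simp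

lemma norm_matrix_vector_mult_le: "norm ((M :: real^'q^'p) *v x) \<le> spec_norm M * norm x"
  unfolding spec_norm_def by (rule onorm) simp

lemma spec_norm_transpose: "spec_norm (transpose (M :: real^'q^'p)) = spec_norm M"
  unfolding spec_norm_def by (simp add: onorm_adjoint adjoint_matrix[symmetric])

lemma spec_norm_transpose_mult_self:
  "spec_norm (transpose (M :: real^'q^'p) ** M) = (spec_norm M)\<^sup>2"
proof -
  have "onorm (\<lambda>x. adjoint (\<lambda>x. M *v x) (M *v x)) = (onorm (\<lambda>x. M *v x))\<^sup>2"
    by (rule onorm_adjoint_compose_self) simp
  then show ?thesis
    unfolding spec_norm_def adjoint_matrix matrix_vector_mul_assoc .
qed

lemma spec_norm_mult_transpose_self:
  "spec_norm ((M :: real^'q^'p) ** transpose M) = (spec_norm M)\<^sup>2"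
  using spec_norm_transpose_mult_self[of "transpose M"] by (simp add: spec_norm_transpose)

lemma inner_columns: "inner (F :: real^'d^'p) G = (\<Sum>j\<in>UNIV. inner (column j F) (column j G))"
  unfolding inner_vec_def column_def by (simp add: inner_real_def) (rule sum.swap)

lemma column_matrix_mult: "column j ((M :: real^'q^'p) ** (F :: real^'d^'q)) = M *v column j F"
  by (simp add: column_def matrix_matrix_mult_def matrix_vector_mult_def vec_eq_iff)

lemma inner_matrix_vector_mult: "inner ((M :: real^'q^'p) *v x) y = inner x (transpose M *v y)"
  using adjoint_works[OF matrix_vector_mul_linear, of x M y] by (simp add: adjoint_matrix)

lemma inner_matrix_mult:
  "inner ((M :: real^'q^'p) ** (F :: real^'d^'q)) Z = inner F (transpose M ** Z)"
  unfolding inner_columns[of "M ** F"] inner_columns[of F] column_matrix_mult inner_matrix_vector_mult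
  by (rule refl)

lemma norm_sq_columns: "(norm (F :: real^'d^'p))\<^sup>2 = (\<Sum>j\<in>UNIV. (norm (column j F))\<^sup>2)"
  unfolding power2_norm_eq_inner by (rule inner_columns)

lemma norm_matrix_mult_le: "norm ((M :: real^'q^'p) ** (F :: real^'d^'q)) \<le> spec_norm M * norm F"
proof (rule power2_le_imp_le)
  have "(norm (M ** F))\<^sup>2 = (\<Sum>j\<in>UNIV. (norm (M *v column j F))\<^sup>2)"
    unfolding norm_sq_columns[of "M ** F"] column_matrix_mult by (rule refl)
  also have "\<dots> \<le> (\<Sum>j\<in>UNIV. (spec_norm M)\<^sup>2 * (norm (column j F))\<^sup>2)"
    unfolding power_mult_distrib[symmetric]
    by (intro sum_mono power_mono norm_matrix_vector_mult_le norm_ge_zero)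
  also have "\<dots> = (spec_norm M * norm F)\<^sup>2"
    unfolding power_mult_distrib norm_sq_columns[of F] sum_distrib_left by (rule refl)
  finally show "(norm (M ** F))\<^sup>2 \<le> (spec_norm M * norm F)\<^sup>2" .
  show "0 \<le> spec_norm M * norm F"
    using spec_norm_nonneg[of M] by simp
qed

lemma matrix_diff_rdistrib: "((M :: real^'q^'p) - N) ** F = M ** F - N ** F"
  by (simp add: matrix_matrix_mult_def vec_eq_iff sum_subtractf algebra_simps)

lemma linear_matrix_mult: "linear (\<lambda>F :: real^'d^'q. (M :: real^'q^'p) ** F)"
  by (rule linearI)
    (simp_all add: matrix_add_ldistrib matrix_scalar_ac scalar_matrix_assoc[symmetric])

lemma adjoint_matrix_mult:
  "adjoint (\<lambda>F :: real^'d^'q. (M :: real^'q^'p) ** F) = (\<lambda>Z. transpose M ** Z)"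
  by (rule adjoint_unique) (simp add: inner_matrix_mult)

lemma onorm_matrix_mult_le: "onorm (\<lambda>F :: real^'d^'q. (M :: real^'q^'p) ** F) \<le> spec_norm M"
  by (rule onorm_le) (simp add: norm_matrix_mult_le mult.commute)

lemma trace_transpose_mult: "trace (transpose (F :: real^'d^'n) ** G) = inner F G"
  unfolding trace_def matrix_matrix_mult_def transpose_def inner_vec_def
  by (simp add: inner_real_def) (rule sum.swap)

section \<open>Projections and support functions\<close>

text \<open>For convex \<open>K\<close> this variational inequality characterises the nearest-point map.\<close>

definition is_projection_onto :: "('a::real_inner \<Rightarrow> 'a) \<Rightarrow> 'a set \<Rightarrow> bool" where
  "is_projection_onto p K \<longleftrightarrow>
    (\<forall>u. p u \<in> K \<and> (\<forall>w\<in>K. inner (u - p u) (w - p u) \<le> 0))"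

definition is_support_function :: "('a::real_inner \<Rightarrow> real) \<Rightarrow> 'a set \<Rightarrow> bool" where
  "is_support_function g K \<longleftrightarrow>
    (\<forall>v. (\<forall>w\<in>K. inner v w \<le> g v) \<and> (\<exists>w\<in>K. inner v w = g v))"

lemma projection_firmly_nonexpansive:
  assumes "is_projection_onto p K"
  shows "(norm (p a - p b))\<^sup>2 \<le> inner (p a - p b) (a - b)"
proof -
  have "inner (a - p a) (p b - p a) \<le> 0" and "inner (b - p b) (p a - p b) \<le> 0"
    using assms unfolding is_projection_onto_def by blast+
  moreover have "inner (a - p a) (p b - p a) + inner (b - p b) (p a - p b)
      = (norm (p a - p b))\<^sup>2 - inner (p a - p b) (a - b)"
    by (simp add: power2_norm_eq_inner inner_diff_left inner_diff_right inner_commute algebra_simps)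
  ultimately show ?thesis by linarith
qed

lemma projection_nonexpansive:
  assumes "is_projection_onto p K"
  shows "norm (p a - p b) \<le> norm (a - b)"
proof -
  have "(norm (p a - p b))\<^sup>2 \<le> norm (p a - p b) * norm (a - b)"
    using projection_firmly_nonexpansive[OF assms] norm_cauchy_schwarz order_trans by blast
  then show ?thesis
    by (cases "p a = p b") (auto simp: power2_eq_square)
qed

lemma continuous_on_projection:
  assumes "is_projection_onto p K"
  shows "continuous_on T p"
  by (rule lipschitz_on_continuous_on[of 1])
    (simp add: lipschitz_on_def dist_norm projection_nonexpansive[OF assms])

lemma projection_eqI:
  assumes "is_projection_onto p K" and "z \<in> K"
    and "\<And>w. w \<in> K \<Longrightarrow> inner (u - z) (w - z) \<le> 0"
  shows "p u = z"
proof -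
  have "inner (u - p u) (z - p u) \<le> 0" and "inner (u - z) (p u - z) \<le> 0"
    using assms unfolding is_projection_onto_def by blast+
  moreover have "inner (u - p u) (z - p u) + inner (u - z) (p u - z) = (norm (z - p u))\<^sup>2"
    by (simp add: power2_norm_eq_inner inner_diff_left inner_diff_right inner_commute algebra_simps)
  ultimately have "(norm (z - p u))\<^sup>2 \<le> 0"
    by linarith
  then show ?thesis by simp
qed

text \<open>The dual sets of the two options are \<open>rowwise (rowwise {-lam1..lam1})\<close> (Option I) and
  \<open>rowwise (cball 0 lam1)\<close> (Option II); \<open>clip_I\<close> and \<open>clip_II\<close> are the row-wise projections.\<close>

definition rowwise :: "'a set \<Rightarrow> ('a^'i) set" where
  "rowwise K = {Z. \<forall>i. Z $ i \<in> K}"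

lemma convex_rowwise: "convex K \<Longrightarrow> convex (rowwise K :: ('a::real_vector^'i) set)"
  unfolding convex_def rowwise_def by auto

lemma compact_rowwise:
  fixes K :: "'a::{real_normed_vector, heine_borel} set"
  assumes "compact K"
  shows "compact (rowwise K :: ('a^'i) set)"
proof -
  obtain r where r: "\<And>v. v \<in> K \<Longrightarrow> norm v \<le> r"
    using compact_imp_bounded[OF assms] bounded_iff by blast
  have "norm Z \<le> real CARD('i) * r" if "Z \<in> rowwise K" for Z :: "'a^'i"
  proof -
    have "norm Z \<le> (\<Sum>i\<in>UNIV. norm (Z $ i))"
      unfolding norm_vec_def by (rule L2_set_le_sum) simp
    also have "\<dots> \<le> real CARD('i) * r"
      by (rule sum_bounded_above) (use that r in \<open>auto simp: rowwise_def\<close>)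
    finally show ?thesis .
  qed
  then have "bounded (rowwise K :: ('a^'i) set)"
    unfolding bounded_iff by blast
  moreover have "rowwise K = (\<Inter>i. (\<lambda>Z::'a^'i. Z $ i) -` K)"
    unfolding rowwise_def by auto
  then have "closed (rowwise K :: ('a^'i) set)"
    by (metis closed_INT closed_vimage_vec_nth compact_imp_closed[OF assms])
  ultimately show ?thesis
    by (simp add: compact_eq_bounded_closed)
qed

lemma projection_rowwise:
  assumes "is_projection_onto p K"
  shows "is_projection_onto (\<lambda>Z::'a::real_inner^'i. \<chi> i. p (Z $ i)) (rowwise K)"
  using assms unfolding is_projection_onto_def rowwise_def inner_vec_def
  by (auto intro: sum_nonpos)

lemma support_function_rowwise:
  assumes "is_support_function g K"
  shows "is_support_function (\<lambda>V::'a::real_inner^'i. \<Sum>i\<in>UNIV. g (V $ i)) (rowwise K)"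
  unfolding is_support_function_def
proof (intro allI conjI)
  fix V :: "'a^'i"
  show "\<forall>W\<in>rowwise K. inner V W \<le> (\<Sum>i\<in>UNIV. g (V $ i))"
    using assms unfolding is_support_function_def rowwise_def inner_vec_def
    by (auto intro: sum_mono)
  have "\<forall>i. \<exists>w. w \<in> K \<and> inner (V $ i) w = g (V $ i)"
    using assms unfolding is_support_function_def by blast
  then obtain w where "\<forall>i. w i \<in> K \<and> inner (V $ i) (w i) = g (V $ i)"
    by (metis choice)
  then show "\<exists>W\<in>rowwise K. inner V W = (\<Sum>i\<in>UNIV. g (V $ i))"
    by (intro bexI[of _ "\<chi> i. w i"]) (simp_all add: rowwise_def inner_vec_def)
qed

lemma projection_clip:
  assumes "0 \<le> c"
  shows "is_projection_onto (\<lambda>t::real. sgn t * min \<bar>t\<bar> c) {-c..c}"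
  using assms unfolding is_projection_onto_def
  by (auto simp: sgn_if min_def mult_le_0_iff abs_if)

lemma support_function_abs:
  assumes "0 \<le> c"
  shows "is_support_function (\<lambda>v::real. c * \<bar>v\<bar>) {-c..c}"
  unfolding is_support_function_def
proof (intro allI conjI)
  fix v :: real
  show "\<forall>w\<in>{-c..c}. inner v w \<le> c * \<bar>v\<bar>"
  proof
    fix w :: real assume "w \<in> {-c..c}"
    then have "\<bar>v\<bar> * \<bar>w\<bar> \<le> \<bar>v\<bar> * c"
      by (intro mult_left_mono) auto
    then show "inner v w \<le> c * \<bar>v\<bar>"
      using abs_ge_self[of "v * w"] by (simp add: abs_mult mult.commute)
  qed
  show "\<exists>w\<in>{-c..c}. inner v w = c * \<bar>v\<bar>"
    using assms by (intro bexI[of _ "c * sgn v"]) (auto simp: abs_if sgn_if)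
qed

lemma projection_ball:
  assumes "0 \<le> c"
  shows "is_projection_onto
    (\<lambda>v::'a::real_inner. if v = 0 then 0 else (min (norm v) c / norm v) *\<^sub>R v) (cball 0 c)"
  unfolding is_projection_onto_def
proof (intro allI conjI ballI)
  fix v w :: 'a
  define pv where "pv = (if v = 0 then 0 else (min (norm v) c / norm v) *\<^sub>R v)"
  show "pv \<in> cball 0 c"
    using assms by (auto simp: pv_def)
  assume w: "w \<in> cball 0 c"
  show "inner (v - pv) (w - pv) \<le> 0"
  proof (cases "norm v \<le> c")
    case True
    then have "pv = v" by (auto simp: pv_def min_def)
    then show ?thesis by simp
  next
    case False
    then have "v \<noteq> 0" and pv: "pv = (c / norm v) *\<^sub>R v"
      using assms by (auto simp: pv_def min_def)
    have "inner v (w - pv) = inner v w - c * norm v"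
      using \<open>v \<noteq> 0\<close> by (simp add: pv inner_diff_right dot_square_norm power2_eq_square)
    also have "\<dots> \<le> norm v * norm w - c * norm v"
      using norm_cauchy_schwarz[of v w] by simp
    also have "\<dots> \<le> 0"
      using mult_left_mono[of "norm w" c "norm v"] w by (simp add: mult.commute)
    finally have "inner v (w - pv) \<le> 0" .
    moreover have "v - pv = (1 - c / norm v) *\<^sub>R v"
      by (simp add: pv algebra_simps)
    moreover have "0 \<le> 1 - c / norm v"
      using False by (simp add: divide_le_eq_1)
    ultimately show ?thesis
      by (simp add: mult_nonneg_nonpos)
  qed
qed

lemma support_function_norm:
  assumes "0 \<le> c"
  shows "is_support_function (\<lambda>v::'a::real_inner. c * norm v) (cball 0 c)"
  unfolding is_support_function_def
proof (intro allI conjI)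
  fix v :: 'a
  show "\<forall>w\<in>cball 0 c. inner v w \<le> c * norm v"
  proof
    fix w :: 'a assume "w \<in> cball 0 c"
    then have "norm v * norm w \<le> norm v * c"
      by (intro mult_left_mono) auto
    then show "inner v w \<le> c * norm v"
      using norm_cauchy_schwarz[of v w] by (simp add: mult.commute)
  qed
  show "\<exists>w\<in>cball 0 c. inner v w = c * norm v"
    using assms
    by (intro bexI[of _ "if v = 0 then 0 else (c / norm v) *\<^sub>R v"])
      (auto simp: dot_square_norm power2_eq_square)
qed

section \<open>A primal-dual fixed-point iteration\<close>

lemma norm_sq_le_of_onorm_sq_le:
  assumes "bounded_linear f" and "(onorm f)\<^sup>2 \<le> s"
  shows "(norm (f x))\<^sup>2 \<le> s * (norm x)\<^sup>2"
proof -
  have "(norm (f x))\<^sup>2 \<le> (onorm f * norm x)\<^sup>2"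
    using onorm[OF assms(1)] by (intro power_mono) auto
  also have "\<dots> \<le> s * (norm x)\<^sup>2"
    unfolding power_mult_distrib using assms(2) by (intro mult_right_mono) auto
  finally show ?thesis .
qed

lemma sum_norm_sq_minus_four_inner_le:
  fixes a b :: "'a::real_inner"
  shows "(norm a)\<^sup>2 + (norm b)\<^sup>2 - 4 * inner a b \<le> 3/2 * (norm (a - b))\<^sup>2"
proof -
  have "2 * (norm a)\<^sup>2 + 2 * (norm b)\<^sup>2 - 8 * inner a b = 3 * (norm (a - b))\<^sup>2 - (norm (a + b))\<^sup>2"
    unfolding power2_norm_eq_inner
    by (simp add: inner_diff_left inner_diff_right inner_add_left inner_add_right inner_commute
        algebra_simps)
  then show ?thesis
    using zero_le_power2[of "norm (a + b)"] by linarith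
qed

lemma lyapunov_tendsto_zero:
  fixes f :: "nat \<Rightarrow> 'a::real_normed_vector"
  assumes "\<And>k. 0 \<le> W k" and "\<And>k. W (Suc k) \<le> W k - c * (norm (f k))\<^sup>2" and "0 < c"
  shows "f \<longlonglongrightarrow> 0"
proof -
  have telescope: "c * (\<Sum>k<n. (norm (f k))\<^sup>2) \<le> W 0 - W n" for n
  proof (induction n)
    case (Suc n)
    then show ?case using assms(2)[of n] by (simp add: distrib_left)
  qed simp
  have "(\<Sum>k<n. (norm (f k))\<^sup>2) \<le> W 0 / c" for n
    using telescope[of n] assms(1)[of n] assms(3) by (simp add: field_simps)
  then have "summable (\<lambda>k. (norm (f k))\<^sup>2)"
    by (intro summableI_nonneg_bounded) auto
  then have "(\<lambda>k. sqrt ((norm (f k))\<^sup>2)) \<longlonglongrightarrow> sqrt 0"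
    by (intro tendsto_real_sqrt summable_LIMSEQ_zero)
  then show ?thesis
    by (simp add: tendsto_norm_zero_iff)
qed

locale primal_dual_problem =
  fixes D :: "'a::euclidean_space \<Rightarrow> 'b::euclidean_space"
    and S :: "'b set" and P :: "'b \<Rightarrow> 'b" and G :: "'b \<Rightarrow> real"
    and X :: 'a and lam2 :: real
  assumes linear_D: "linear D"
    and compact_S: "compact S" and convex_S: "convex S" and S_nonempty: "S \<noteq> {}"
    and projection_P: "is_projection_onto P S"
    and support_G: "is_support_function G S"
    and lam2_nonneg: "0 \<le> lam2"
begin

definition objective :: "'a \<Rightarrow> real" where
  "objective x = G (D x) + lam2 / 2 * (norm (D x))\<^sup>2 + 1/2 * (norm (x - X))\<^sup>2"

definition hessian :: "'a \<Rightarrow> 'a" where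
  "hessian x = x + lam2 *\<^sub>R adjoint D (D x)"

text \<open>The optimality conditions: \<open>z\<close> attains the maximum \<open>G (D x)\<close> of \<open>\<langle>D x, -\<rangle>\<close> on
  \<open>S\<close> (i.e. \<open>z \<in> \<partial>G (D x)\<close>), and the gradient \<open>hessian x - X\<close> of the smooth part
  equals \<open>-D\<^sup>* z\<close>.\<close>

definition saddle_point :: "'a \<Rightarrow> 'b \<Rightarrow> bool" where
  "saddle_point x z \<longleftrightarrow>
    z \<in> S \<and> hessian x + adjoint D z = X \<and> (\<forall>w\<in>S. inner (D x) (w - z) \<le> 0)"

lemma inner_adjoint_D: "inner x (adjoint D z) = inner (D x) z"
  by (rule adjoint_works[OF linear_D])

lemma linear_hessian: "linear hessian"
  by (rule linearI)
    (simp_all add: hessian_def linear_add[OF linear_D] linear_add[OF adjoint_linear[OF linear_D]]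
      linear_scale[OF linear_D] linear_scale[OF adjoint_linear[OF linear_D]] algebra_simps)

lemma inner_hessian: "inner x (hessian x) = (norm x)\<^sup>2 + lam2 * (norm (D x))\<^sup>2"
  by (simp add: hessian_def inner_add_right inner_adjoint_D power2_norm_eq_inner)

lemma hessian_invertible: "\<exists>H. linear H \<and> (\<forall>y. hessian (H y) = y)"
proof -
  have "inj hessian"
    unfolding linear_injective_0[OF linear_hessian]
  proof (intro allI impI)
    fix x assume "hessian x = 0"
    then have "(norm x)\<^sup>2 + lam2 * (norm (D x))\<^sup>2 = 0"
      using inner_hessian[of x] by simp
    then show "x = 0"
      using lam2_nonneg by (simp add: add_nonneg_eq_0_iff)
  qed
  then show ?thesis
    using linear_injective_isomorphism[OF linear_hessian] by blast
qed

text \<open>The saddle point is found as a fixed point of the dual map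
  \<open>z \<mapsto> P (z + D (hessian\<inverse> (X - D\<^sup>* z)))\<close>, which sends the compact convex set \<open>S\<close>
  into itself.\<close>

lemma saddle_point_exists: "\<exists>x z. saddle_point x z"
proof -
  obtain H where "linear H" and H: "\<And>y. hessian (H y) = y"
    using hessian_invertible by blast
  define T where "T z = P (z + D (H (X - adjoint D z)))" for z
  have "continuous_on S (\<lambda>z. z + D (H (X - adjoint D z)))"
    by (intro continuous_intros linear_continuous_on_compose[OF _ linear_D]
        linear_continuous_on_compose[OF _ \<open>linear H\<close>]
        linear_continuous_on_compose[OF _ adjoint_linear[OF linear_D]])
  then have "continuous_on S T"
    unfolding T_def using continuous_on_compose2[OF continuous_on_projection[OF projection_P]]
    by blast
  moreover have "T ` S \<subseteq> S"
    using projection_P unfolding T_def is_projection_onto_def by blast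
  ultimately obtain z where "z \<in> S" and "T z = z"
    using brouwer[OF compact_S convex_S S_nonempty] by blast
  define x where "x = H (X - adjoint D z)"
  have "inner (D x) (w - z) \<le> 0" if "w \<in> S" for w
    using projection_P that \<open>T z = z\<close> unfolding is_projection_onto_def T_def x_def
    by (metis add_diff_cancel_left')
  then have "saddle_point x z"
    using \<open>z \<in> S\<close> by (simp add: saddle_point_def x_def H)
  then show ?thesis by blast
qed

lemma saddle_point_objective_growth:
  assumes "saddle_point x0 z0"
  shows "objective x0 + 1/2 * (norm (x - x0))\<^sup>2 \<le> objective x"
proof -
  define h where "h = x - x0"
  have z0: "z0 \<in> S" and opt: "hessian x0 + adjoint D z0 = X"
    and var: "\<And>w. w \<in> S \<Longrightarrow> inner (D x0) (w - z0) \<le> 0"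
    using assms unfolding saddle_point_def by auto
  have "G (D x) \<ge> inner (D x) z0"
    using support_G z0 unfolding is_support_function_def by blast
  moreover have "G (D x0) \<le> inner (D x0) z0"
  proof -
    obtain w where "w \<in> S" and "inner (D x0) w = G (D x0)"
      using support_G unfolding is_support_function_def by blast
    then show ?thesis
      using var[of w] by (simp add: inner_diff_right)
  qed
  moreover have Dx: "D x = D x0 + D h"
    unfolding h_def using linear_diff[OF linear_D] by simp
  moreover have "inner (x0 - X) h + lam2 * inner (D x0) (D h) = - inner (D h) z0"
  proof -
    have "inner h X = inner h x0 + lam2 * inner (D h) (D x0) + inner (D h) z0"
      unfolding opt[symmetric] hessian_def by (simp add: inner_add_right inner_adjoint_D)
    then show ?thesis
      by (simp add: inner_diff_left inner_commute algebra_simps)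
  qed
  moreover have "(norm (D x))\<^sup>2 = (norm (D x0))\<^sup>2 + 2 * inner (D x0) (D h) + (norm (D h))\<^sup>2"
    unfolding Dx power2_norm_eq_inner by (simp add: inner_add_left inner_add_right inner_commute)
  moreover have "(norm (x - X))\<^sup>2 = (norm (x0 - X))\<^sup>2 + 2 * inner (x0 - X) h + (norm h)\<^sup>2"
    unfolding h_def power2_norm_eq_inner
    by (simp add: inner_diff_left inner_diff_right inner_commute algebra_simps)
  moreover have "0 \<le> lam2 * (norm (D h))\<^sup>2"
    using lam2_nonneg by simp
  ultimately show ?thesis
    unfolding objective_def h_def[symmetric] by (simp add: inner_add_left algebra_simps)
qed

lemma converges_to_opt_if_tendsto_saddle_point:
  assumes "saddle_point x0 z0" and "xs \<longlonglongrightarrow> x0"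
  shows "converges_to_opt xs objective"
proof -
  have min: "objective x0 \<le> objective x" for x
    using saddle_point_objective_growth[OF assms(1), of x] zero_le_power2[of "norm (x - x0)"]
    by linarith
  have "x = x0" if "\<forall>y. objective x \<le> objective y" for x
  proof -
    have "(norm (x - x0))\<^sup>2 \<le> 0"
      using saddle_point_objective_growth[OF assms(1), of x] that[rule_format, of x0] by linarith
    then show ?thesis by simp
  qed
  then show ?thesis
    unfolding converges_to_opt_def using min assms(2) by blast
qed

end

locale primal_dual_iteration = primal_dual_problem +
  fixes s gam bet :: real
  assumes onorm_D: "(onorm D)\<^sup>2 \<le> s"
    and gam_pos: "0 < gam" and bet_pos: "0 < bet"
    and gam_bound: "gam * (1 + lam2 * s) < 2"
    and bet_bound: "gam * bet * s \<le> 4/3"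
begin

fun step :: "'a \<times> 'b \<Rightarrow> 'a \<times> 'b" where
  "step (x, z) =
    (let y = x - gam *\<^sub>R (hessian x - X);
         z' = P (z + bet *\<^sub>R D (y - gam *\<^sub>R adjoint D z))
     in (y - gam *\<^sub>R adjoint D z', z'))"

lemma norm_D_sq_le: "(norm (D x))\<^sup>2 \<le> s * (norm x)\<^sup>2"
  using linear_D onorm_D by (intro norm_sq_le_of_onorm_sq_le) (simp_all add: linear_conv_bounded_linear)

lemma norm_adjoint_D_sq_le: "(norm (adjoint D z))\<^sup>2 \<le> s * (norm z)\<^sup>2"
  using adjoint_linear[OF linear_D] onorm_D
  by (intro norm_sq_le_of_onorm_sq_le) (simp_all add: linear_conv_bounded_linear onorm_adjoint[OF linear_D])

text \<open>The Hessian is cocoercive: \<open>\<parallel>hessian h\<parallel>\<^sup>2 \<le> (1 + lam2 s) \<langle>h, hessian h\<rangle>\<close>, hence the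
  explicit gradient step contracts.\<close>

lemma gradient_step_contraction:
  "(norm (h - gam *\<^sub>R hessian h))\<^sup>2 \<le> (1 - gam * (2 - gam * (1 + lam2 * s))) * (norm h)\<^sup>2"
proof -
  define L where "L = 1 + lam2 * s"
  define a where "a = (norm (D h))\<^sup>2"
  have inner_ge: "(norm h)\<^sup>2 \<le> inner h (hessian h)"
    using inner_hessian[of h] lam2_nonneg by simp
  have "(norm (hessian h))\<^sup>2 = (norm h)\<^sup>2 + 2 * lam2 * a + lam2\<^sup>2 * (norm (adjoint D (D h)))\<^sup>2"
    unfolding hessian_def a_def power2_norm_eq_inner
    by (simp add: inner_add_left inner_add_right inner_adjoint_D inner_commute power2_eq_square
        algebra_simps)
  also have "\<dots> \<le> (norm h)\<^sup>2 + 2 * lam2 * a + lam2\<^sup>2 * (s * a)"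
    unfolding a_def by (intro add_left_mono mult_left_mono norm_adjoint_D_sq_le) simp
  also have "\<dots> \<le> L * inner h (hessian h)"
  proof -
    have "lam2 * a \<le> lam2 * (s * (norm h)\<^sup>2)"
      unfolding a_def using norm_D_sq_le lam2_nonneg by (rule mult_left_mono)
    moreover have "L * inner h (hessian h)
        = (norm h)\<^sup>2 + lam2 * a + lam2 * (s * (norm h)\<^sup>2) + lam2\<^sup>2 * (s * a)"
      by (simp add: L_def inner_hessian a_def power2_eq_square algebra_simps)
    ultimately show ?thesis
      by linarith
  qed
  finally have cocoercive: "(norm (hessian h))\<^sup>2 \<le> L * inner h (hessian h)" .
  have "gam * (2 - gam * L) * (norm h)\<^sup>2 \<le> gam * (2 - gam * L) * inner h (hessian h)"
    using inner_ge gam_pos gam_bound by (intro mult_left_mono) (simp_all add: L_def)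
  moreover have "gam\<^sup>2 * (norm (hessian h))\<^sup>2 \<le> gam\<^sup>2 * (L * inner h (hessian h))"
    using cocoercive by (rule mult_left_mono) simp
  moreover have "(norm (h - gam *\<^sub>R hessian h))\<^sup>2
      = (norm h)\<^sup>2 - 2 * gam * inner h (hessian h) + gam\<^sup>2 * (norm (hessian h))\<^sup>2"
    unfolding power2_norm_eq_inner
    by (simp add: inner_diff_left inner_diff_right inner_commute power2_eq_square algebra_simps)
  ultimately show ?thesis
    unfolding L_def[symmetric] by (simp add: power2_eq_square algebra_simps)
qed

lemma saddle_point_fixed:
  assumes "saddle_point x0 z0"
  shows "step (x0, z0) = (x0, z0)"
proof -
  have z0: "z0 \<in> S" and opt: "hessian x0 + adjoint D z0 = X"
    and var: "\<And>w. w \<in> S \<Longrightarrow> inner (D x0) (w - z0) \<le> 0"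
    using assms unfolding saddle_point_def by auto
  have "hessian x0 - X = - adjoint D z0"
    unfolding opt[symmetric] by simp
  then have y0: "x0 - gam *\<^sub>R (hessian x0 - X) = x0 + gam *\<^sub>R adjoint D z0"
    by simp
  have Pz0: "P (z0 + bet *\<^sub>R D x0) = z0"
    using projection_P z0
  proof (rule projection_eqI)
    fix w assume "w \<in> S"
    then show "inner (z0 + bet *\<^sub>R D x0 - z0) (w - z0) \<le> 0"
      using var[of w] bet_pos by (simp add: mult_nonneg_nonpos)
  qed
  then show ?thesis
    by (simp add: Let_def y0 Pz0)
qed

definition energy :: "'a \<Rightarrow> 'b \<Rightarrow> real" where
  "energy h e = bet / gam * (norm h)\<^sup>2 + (norm e)\<^sup>2 - gam * bet / 2 * (norm (adjoint D e))\<^sup>2"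

lemma energy_nonneg: "0 \<le> energy h e"
proof -
  have "gam * bet / 2 * (norm (adjoint D e))\<^sup>2 \<le> gam * bet / 2 * (s * (norm e)\<^sup>2)"
    using gam_pos bet_pos norm_adjoint_D_sq_le by (intro mult_left_mono) auto
  also have "\<dots> = (gam * bet * s) * (norm e)\<^sup>2 / 2"
    by simp
  also have "\<dots> \<le> 4/3 * (norm e)\<^sup>2 / 2"
    using mult_right_mono[OF bet_bound zero_le_power2[of "norm e"]] by simp
  finally have "gam * bet / 2 * (norm (adjoint D e))\<^sup>2 \<le> (norm e)\<^sup>2"
    using zero_le_power2[of "norm e"] by linarith
  moreover have "0 \<le> bet / gam * (norm h)\<^sup>2"
    using gam_pos bet_pos by simp
  ultimately show ?thesis
    unfolding energy_def by linarith
qed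

text \<open>Here \<open>e\<close>, \<open>e'\<close> are the dual errors before and after the projection step and \<open>u\<close> is the
  primal error after the gradient step; the bound \<open>gam * bet * s \<le> 4/3\<close> absorbs the
  cross terms in \<open>D\<^sup>*\<close>.\<close>

lemma energy_dual_step:
  assumes firm: "(norm e')\<^sup>2 \<le> inner e' (e + bet *\<^sub>R D (u - gam *\<^sub>R adjoint D e))"
  shows "energy (u - gam *\<^sub>R adjoint D e') e' \<le> energy u e"
proof -
  define p' where "p' = adjoint D e'"
  define p where "p = adjoint D e"
  have "(norm (u - gam *\<^sub>R p'))\<^sup>2 = (norm u)\<^sup>2 - 2 * gam * inner p' u + gam\<^sup>2 * (norm p')\<^sup>2"
    unfolding power2_norm_eq_inner
    by (simp add: inner_diff_left inner_diff_right inner_commute power2_eq_square algebra_simps)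
  then have "bet / gam * (norm (u - gam *\<^sub>R p'))\<^sup>2
      = bet / gam * ((norm u)\<^sup>2 - 2 * gam * inner p' u + gam\<^sup>2 * (norm p')\<^sup>2)"
    by simp
  also have "\<dots> = bet / gam * (norm u)\<^sup>2 - 2 * bet * inner p' u + gam * bet * (norm p')\<^sup>2"
    using gam_pos by (simp add: field_simps power2_eq_square)
  finally have primal: "bet / gam * (norm (u - gam *\<^sub>R p'))\<^sup>2
      = bet / gam * (norm u)\<^sup>2 - 2 * bet * inner p' u + gam * bet * (norm p')\<^sup>2" .
  have "inner e' (D v) = inner p' v" for v
    unfolding p'_def using inner_adjoint_D[of v e'] by (simp add: inner_commute)
  then have dual: "(norm e')\<^sup>2 \<le> inner e' e + bet * inner p' u - gam * bet * inner p' p"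
    using firm unfolding p_def[symmetric] by (simp add: inner_add_right inner_diff_right algebra_simps)
  have "(norm p')\<^sup>2 + (norm p)\<^sup>2 - 4 * inner p' p \<le> 3/2 * (norm (p' - p))\<^sup>2"
    by (rule sum_norm_sq_minus_four_inner_le)
  also have "\<dots> \<le> 3/2 * (s * (norm (e' - e))\<^sup>2)"
    using norm_adjoint_D_sq_le[of "e' - e"]
    by (simp add: p'_def p_def linear_diff[OF adjoint_linear[OF linear_D]])
  finally have "gam * bet / 2 * ((norm p')\<^sup>2 + (norm p)\<^sup>2 - 4 * inner p' p)
      \<le> 3/4 * (gam * bet * s) * (norm (e' - e))\<^sup>2"
    using gam_pos bet_pos by (simp add: mult_left_mono)
  also have "\<dots> \<le> (norm (e' - e))\<^sup>2"
    using mult_right_mono[OF bet_bound zero_le_power2[of "norm (e' - e)"]] by linarith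
  also have "\<dots> = (norm e')\<^sup>2 + (norm e)\<^sup>2 - 2 * inner e' e"
    unfolding power2_norm_eq_inner by (simp add: inner_diff_left inner_diff_right inner_commute)
  finally have coupling: "gam * bet / 2 * ((norm p')\<^sup>2 + (norm p)\<^sup>2 - 4 * inner p' p)
      \<le> (norm e')\<^sup>2 + (norm e)\<^sup>2 - 2 * inner e' e" .
  show ?thesis
    using primal dual coupling unfolding energy_def p'_def[symmetric] p_def[symmetric]
    by (simp add: algebra_simps)
qed

lemma step_error_dynamics:
  assumes "saddle_point x0 z0" and "step (x, z) = (x', z')"
  defines "u \<equiv> (x - x0) - gam *\<^sub>R hessian (x - x0)"
  shows "x' - x0 = u - gam *\<^sub>R adjoint D (z' - z0)"
    and "(norm (z' - z0))\<^sup>2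
      \<le> inner (z' - z0) ((z - z0) + bet *\<^sub>R D (u - gam *\<^sub>R adjoint D (z - z0)))"
proof -
  define y where "y x = x - gam *\<^sub>R (hessian x - X)" for x
  have hdiff: "hessian (x - x0) = hessian x - hessian x0"
    by (rule linear_diff[OF linear_hessian])
  have yu: "y x - y x0 = u"
    unfolding y_def u_def hdiff by (simp add: algebra_simps)
  define a where "a = z + bet *\<^sub>R D (y x - gam *\<^sub>R adjoint D z)"
  define b where "b = z0 + bet *\<^sub>R D (y x0 - gam *\<^sub>R adjoint D z0)"
  have z': "P a = z'" and x': "y x - gam *\<^sub>R adjoint D z' = x'"
    using assms(2) by (auto simp: a_def y_def Let_def)
  have z0: "P b = z0" and x0: "y x0 - gam *\<^sub>R adjoint D z0 = x0"
    using saddle_point_fixed[OF assms(1)] by (auto simp: b_def y_def Let_def)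
  have adjoint_diff: "adjoint D v - adjoint D w = adjoint D (v - w)" for v w
    by (simp add: linear_diff[OF adjoint_linear[OF linear_D]])
  have "x' - x0 = (y x - gam *\<^sub>R adjoint D z') - (y x0 - gam *\<^sub>R adjoint D z0)"
    by (simp only: x' x0)
  then show "x' - x0 = u - gam *\<^sub>R adjoint D (z' - z0)"
    by (simp add: algebra_simps flip: yu adjoint_diff)
  have primal_arg: "(y x - gam *\<^sub>R adjoint D z) - (y x0 - gam *\<^sub>R adjoint D z0)
      = u - gam *\<^sub>R adjoint D (z - z0)"
    by (simp add: algebra_simps flip: yu adjoint_diff)
  have "a - b = (z - z0) + bet *\<^sub>R D (u - gam *\<^sub>R adjoint D (z - z0))"
    unfolding a_def b_def primal_arg[symmetric] linear_diff[OF linear_D] by (simp add: algebra_simps)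
  then show "(norm (z' - z0))\<^sup>2
      \<le> inner (z' - z0) ((z - z0) + bet *\<^sub>R D (u - gam *\<^sub>R adjoint D (z - z0)))"
    using projection_firmly_nonexpansive[OF projection_P, of a b] unfolding z' z0 by simp
qed

lemma energy_descent:
  assumes "saddle_point x0 z0" and "step (x, z) = (x', z')"
  shows "energy (x' - x0) (z' - z0)
    \<le> energy (x - x0) (z - z0) - bet * (2 - gam * (1 + lam2 * s)) * (norm (x - x0))\<^sup>2"
proof -
  define u where "u = (x - x0) - gam *\<^sub>R hessian (x - x0)"
  note dynamics = step_error_dynamics[OF assms, folded u_def]
  have "energy (x' - x0) (z' - z0) \<le> energy u (z - z0)"
    unfolding dynamics(1) by (rule energy_dual_step[OF dynamics(2)])
  moreover have "bet / gam * (norm u)\<^sup>2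
      \<le> bet / gam * (norm (x - x0))\<^sup>2 - bet * (2 - gam * (1 + lam2 * s)) * (norm (x - x0))\<^sup>2"
  proof -
    have "bet / gam * (norm u)\<^sup>2
        \<le> bet / gam * ((1 - gam * (2 - gam * (1 + lam2 * s))) * (norm (x - x0))\<^sup>2)"
      unfolding u_def using gam_pos bet_pos by (intro mult_left_mono gradient_step_contraction) simp
    also have "\<dots> = bet / gam * (norm (x - x0))\<^sup>2
        - bet * (2 - gam * (1 + lam2 * s)) * (norm (x - x0))\<^sup>2"
      using gam_pos by (simp add: field_simps)
    finally show ?thesis .
  qed
  ultimately show ?thesis
    unfolding energy_def by linarith
qed

theorem iterates_tendsto_saddle_point:
  assumes "saddle_point x0 z0"
  shows "(\<lambda>k. fst ((step ^^ k) p)) \<longlonglongrightarrow> x0"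
proof -
  define W where "W k = energy (fst ((step ^^ k) p) - x0) (snd ((step ^^ k) p) - z0)" for k
  define c where "c = bet * (2 - gam * (1 + lam2 * s))"
  have "0 < c"
    using bet_pos gam_bound by (simp add: c_def)
  have "W (Suc k) \<le> W k - c * (norm (fst ((step ^^ k) p) - x0))\<^sup>2" for k
    unfolding W_def c_def using energy_descent[OF assms, of "fst ((step ^^ k) p)" "snd ((step ^^ k) p)"]
    by simp
  then have "(\<lambda>k. fst ((step ^^ k) p) - x0) \<longlonglongrightarrow> 0"
    using \<open>0 < c\<close> by (intro lyapunov_tendsto_zero[of W]) (simp_all add: W_def energy_nonneg)
  then show ?thesis
    by (simp add: LIM_zero_iff)
qed

corollary iterates_converge_to_opt: "converges_to_opt (\<lambda>k. fst ((step ^^ k) p)) objective"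
  using saddle_point_exists converges_to_opt_if_tendsto_saddle_point iterates_tendsto_saddle_point
  by blast

end

section \<open>The normalised graph operators\<close>

lemma oriented_incidenceE:
  fixes A :: "real^'n^'n" and Delta :: "real^'n^'m"
  assumes adj: "undirected_adj A" and inc: "oriented_incidence A Delta"
  obtains src tgt :: "'m \<Rightarrow> 'n"
  where "\<And>l c. Delta$l$c = (if c = src l then -1 else if c = tgt l then 1 else 0)"
    and "\<And>l. src l \<noteq> tgt l"
    and "\<And>i j. (\<Sum>l\<in>UNIV. of_bool ({src l, tgt l} = {i, j})) = A$i$j"
proof -
  obtain src tgt :: "'m \<Rightarrow> 'n" where
    bij: "bij_betw (\<lambda>l. {src l, tgt l}) UNIV {{i, j} | i j. A$i$j = 1}"
    and Delta: "\<And>l c. Delta$l$c = (if c = src l then -1 else if c = tgt l then 1 else 0)"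
    using inc unfolding oriented_incidence_def by blast
  define e where "e l = {src l, tgt l}" for l
  have A01: "A$i$j = 0 \<or> A$i$j = 1" and Asym: "A$i$j = A$j$i" and Aloop: "A$i$i = 0" for i j
    using adj unfolding undirected_adj_def by auto
  have "inj e" and range_e: "range e = {{i, j} | i j. A$i$j = 1}"
    using bij by (simp_all add: bij_betw_def e_def[abs_def])
  have edge_iff: "{i, j} \<in> range e \<longleftrightarrow> A$i$j = 1" for i j
    unfolding range_e using Asym by (auto simp: doubleton_eq_iff)
  have loopless: "src l \<noteq> tgt l" for l
    using edge_iff[of "src l" "src l"] Aloop[of "src l"] by (auto simp: e_def)
  have multiplicity: "(\<Sum>l\<in>UNIV. of_bool (e l = {i, j})) = A$i$j" for i j
  proof (cases "A$i$j = 1")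
    case True
    then obtain l0 where "e l0 = {i, j}"
      using edge_iff by (metis rangeE)
    then have "{l. e l = {i, j}} = {l0}"
      using \<open>inj e\<close> by (auto simp: inj_def)
    then show ?thesis
      using True by simp
  next
    case False
    then have "{l. e l = {i, j}} = {}"
      using edge_iff by blast
    then show ?thesis
      using False A01[of i j] by simp
  qed
  from Delta loopless multiplicity show thesis
    unfolding e_def by (rule that)
qed

lemma oriented_incidence_gram:
  fixes A :: "real^'n^'n" and Delta :: "real^'n^'m"
  assumes adj: "undirected_adj A" and inc: "oriented_incidence A Delta"
  shows "transpose Delta ** Delta = diag_mat (\<lambda>i. \<Sum>j\<in>UNIV. A$i$j) - A"
proof -
  obtain src tgt :: "'m \<Rightarrow> 'n"
    where Delta: "\<And>l c. Delta$l$c = (if c = src l then -1 else if c = tgt l then 1 else 0)"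
      and loopless: "\<And>l. src l \<noteq> tgt l"
      and multiplicity: "\<And>i j. (\<Sum>l\<in>UNIV. of_bool ({src l, tgt l} = {i, j})) = A$i$j"
    using oriented_incidenceE[OF adj inc] by blast
  have diagonal: "(\<Sum>l\<in>UNIV. Delta$l$i * Delta$l$i) = (\<Sum>k\<in>UNIV. A$i$k)" for i
  proof -
    have "Delta$l$i * Delta$l$i = (\<Sum>k\<in>UNIV. of_bool ({src l, tgt l} = {i, k}))" for l
    proof -
      have "{k. {src l, tgt l} = {i, k}}
          = (if i = src l then {tgt l} else if i = tgt l then {src l} else {})"
        using loopless[of l] by (auto simp: doubleton_eq_iff)
      then show ?thesis
        using loopless[of l] by (simp add: Delta)
    qed
    then have "(\<Sum>l\<in>UNIV. Delta$l$i * Delta$l$i)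
        = (\<Sum>l\<in>UNIV. \<Sum>k\<in>UNIV. of_bool ({src l, tgt l} = {i, k}))"
      by simp
    also have "\<dots> = (\<Sum>k\<in>UNIV. \<Sum>l\<in>UNIV. of_bool ({src l, tgt l} = {i, k}))"
      by (rule sum.swap)
    finally show ?thesis
      by (simp only: multiplicity)
  qed
  have off_diagonal: "(\<Sum>l\<in>UNIV. Delta$l$i * Delta$l$j) = - A$i$j" if "i \<noteq> j" for i j
  proof -
    have "Delta$l$i * Delta$l$j = - of_bool ({src l, tgt l} = {i, j})" for l
      using that loopless[of l] by (auto simp: Delta doubleton_eq_iff)
    then show ?thesis
      using multiplicity[of i j] by (simp add: sum_negf)
  qed
  have "A$i$i = 0" for i
    using adj unfolding undirected_adj_def by blast
  then have "(transpose Delta ** Delta) $ i $ j = (diag_mat (\<lambda>i. \<Sum>j\<in>UNIV. A$i$j) - A) $ i $ j"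
    for i j
    by (cases "i = j") (simp_all add: matrix_matrix_mult_def transpose_def diag_mat_def diagonal
        off_diagonal)
  then show ?thesis
    by (simp add: vec_eq_iff)
qed

definition inv_sqrt_degree :: "real^'n^'n \<Rightarrow> 'n \<Rightarrow> real" where
  "inv_sqrt_degree A i = 1 / sqrt (\<Sum>j\<in>UNIV. Ahat A $ i $ j)"

lemma Dhat_inv_sqrt_eq: "Dhat_inv_sqrt A = diag_mat (inv_sqrt_degree A)"
  unfolding Dhat_inv_sqrt_def inv_sqrt_degree_def[abs_def] ..

lemma diag_mat_mult_entry: "(diag_mat r ** (M :: real^'q^'n)) $ i $ j = r i * M $ i $ j"
  by (simp add: matrix_matrix_mult_def diag_mat_def if_distrib if_distribR cong: if_cong)

lemma mult_diag_mat_entry: "((M :: real^'n^'q) ** diag_mat r) $ i $ j = M $ i $ j * r j"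
  by (simp add: matrix_matrix_mult_def diag_mat_def if_distrib if_distribR cong: if_cong)

lemma Atilde_entry: "Atilde A $ i $ j = inv_sqrt_degree A i * Ahat A $ i $ j * inv_sqrt_degree A j"
  by (simp add: Atilde_def Dhat_inv_sqrt_eq diag_mat_mult_entry mult_diag_mat_entry)

lemma Deltatilde_entry: "Deltatilde A Delta $ l $ i = Delta $ l $ i * inv_sqrt_degree A i"
  by (simp add: Deltatilde_def Dhat_inv_sqrt_eq mult_diag_mat_entry)

lemma inv_sqrt_degree_sq:
  assumes "undirected_adj A"
  shows "(inv_sqrt_degree A i)\<^sup>2 * (1 + (\<Sum>j\<in>UNIV. A$i$j)) = 1"
proof -
  have "0 \<le> (\<Sum>j\<in>UNIV. A$i$j)"
    using assms unfolding undirected_adj_def by (intro sum_nonneg) (metis order_refl zero_le_one)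
  moreover have "(\<Sum>j\<in>UNIV. Ahat A $ i $ j) = 1 + (\<Sum>j\<in>UNIV. A$i$j)"
    by (simp add: Ahat_def mat_def sum.distrib)
  ultimately show ?thesis
    by (simp add: inv_sqrt_degree_def power_divide)
qed

lemma Ltilde_eq_transpose_mult:
  assumes adj: "undirected_adj A" and inc: "oriented_incidence A Delta"
  shows "Ltilde A = transpose (Deltatilde A Delta) ** Deltatilde A Delta"
proof -
  let ?r = "inv_sqrt_degree A"
  have "(transpose (Deltatilde A Delta) ** Deltatilde A Delta) $ i $ j
      = ?r i * ?r j * (transpose Delta ** Delta) $ i $ j" for i j
    by (simp add: matrix_matrix_mult_def transpose_def Deltatilde_entry sum_distrib_left mult_ac)
  moreover have "Ltilde A $ i $ j = ?r i * ?r j * (transpose Delta ** Delta) $ i $ j" for i j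
  proof (cases "i = j")
    case True
    then show ?thesis
      using inv_sqrt_degree_sq[OF adj, of i] adj
      by (simp add: oriented_incidence_gram[OF adj inc] Ltilde_def Atilde_entry Ahat_def mat_def
          diag_mat_def undirected_adj_def power2_eq_square algebra_simps)
  next
    case False
    then show ?thesis
      by (simp add: oriented_incidence_gram[OF adj inc] Ltilde_def Atilde_entry Ahat_def mat_def
          diag_mat_def)
  qed
  ultimately show ?thesis
    by (simp add: vec_eq_iff)
qed

text \<open>With \<open>y = Dhat\<^sup>-\<^sup>1\<^sup>/\<^sup>2 x\<close> one has
  \<open>\<parallel>x\<parallel>\<^sup>2 + \<langle>x, Atilde x\<rangle> = \<Sum>\<^sub>i\<^sub>j Ahat\<^sub>i\<^sub>j (y\<^sub>i + y\<^sub>j)\<^sup>2 / 2 \<ge> 0\<close>.\<close>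

lemma inner_Atilde_ge:
  assumes adj: "undirected_adj A"
  shows "- (norm x)\<^sup>2 \<le> inner x (Atilde A *v x)"
proof -
  define y where "y i = inv_sqrt_degree A i * x $ i" for i
  define H where "H i j = Ahat A $ i $ j" for i j
  have H_sym: "H i j = H j i" and H_nonneg: "0 \<le> H i j" for i j
    using adj unfolding H_def Ahat_def undirected_adj_def mat_def
    by (auto, metis order_refl zero_le_one)
  have entry_sq: "(x $ i)\<^sup>2 = (\<Sum>j\<in>UNIV. H i j * (y i)\<^sup>2)" for i
  proof -
    have "(\<Sum>j\<in>UNIV. H i j) = 1 + (\<Sum>j\<in>UNIV. A$i$j)"
      by (simp add: H_def Ahat_def mat_def sum.distrib)
    then show ?thesis
      using inv_sqrt_degree_sq[OF adj, of i]
      by (simp add: y_def power_mult_distrib mult.commute flip: sum_distrib_right)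
  qed
  have "(norm x)\<^sup>2 = (\<Sum>i\<in>UNIV. (x $ i)\<^sup>2)"
    unfolding power2_norm_eq_inner inner_vec_def by (simp add: power2_eq_square)
  then have norm_x: "(norm x)\<^sup>2 = (\<Sum>i\<in>UNIV. \<Sum>j\<in>UNIV. H i j * (y i)\<^sup>2)"
    by (simp only: entry_sq)
  have norm_x': "(norm x)\<^sup>2 = (\<Sum>i\<in>UNIV. \<Sum>j\<in>UNIV. H i j * (y j)\<^sup>2)"
    unfolding norm_x by (subst sum.swap) (simp add: H_sym)
  have quad: "inner x (Atilde A *v x) = (\<Sum>i\<in>UNIV. \<Sum>j\<in>UNIV. H i j * y i * y j)"
    by (simp add: inner_vec_def matrix_vector_mult_def Atilde_entry H_def y_def sum_distrib_left
        mult_ac)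
  have "0 \<le> (\<Sum>i\<in>UNIV. \<Sum>j\<in>UNIV. H i j * (y i + y j)\<^sup>2)"
    using H_nonneg by (intro sum_nonneg mult_nonneg_nonneg) auto
  also have "\<dots> = (\<Sum>i\<in>UNIV. \<Sum>j\<in>UNIV. H i j * (y i)\<^sup>2)
      + (\<Sum>i\<in>UNIV. \<Sum>j\<in>UNIV. H i j * (y j)\<^sup>2) + 2 * (\<Sum>i\<in>UNIV. \<Sum>j\<in>UNIV. H i j * y i * y j)"
    by (simp add: sum.distrib sum_distrib_left power2_sum algebra_simps)
  finally show ?thesis
    unfolding norm_x[symmetric] norm_x'[symmetric] quad[symmetric] by linarith
qed

lemma spec_norm_Deltatilde_sq_le:
  fixes A :: "real^'n^'n" and Delta :: "real^'n^'m"
  assumes adj: "undirected_adj A" and inc: "oriented_incidence A Delta"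
  shows "(spec_norm (Deltatilde A Delta))\<^sup>2 \<le> 2"
proof -
  let ?Dt = "Deltatilde A Delta"
  have "spec_norm ?Dt \<le> sqrt 2"
    unfolding spec_norm_def
  proof (rule onorm_le)
    fix x :: "real^'n"
    have "(norm (?Dt *v x))\<^sup>2 = inner x (Ltilde A *v x)"
      by (simp add: power2_norm_eq_inner inner_matrix_vector_mult matrix_vector_mul_assoc
          Ltilde_eq_transpose_mult[OF adj inc] del: vector_transpose_matrix)
    also have "\<dots> = (norm x)\<^sup>2 - inner x (Atilde A *v x)"
      by (simp add: Ltilde_def matrix_vector_mult_diff_rdistrib inner_diff_right power2_norm_eq_inner)
    also have "\<dots> \<le> (sqrt 2 * norm x)\<^sup>2"
      using inner_Atilde_ge[OF adj, of x] by (simp add: power_mult_distrib)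
    finally show "norm (?Dt *v x) \<le> sqrt 2 * norm x"
      by (rule power2_le_imp_le) simp
  qed
  from power_mono[OF this spec_norm_nonneg, of 2] show ?thesis
    by simp
qed

section \<open>Elastic message passing\<close>

lemma smooth_part_eq:
  assumes "Ltilde A = transpose Dt ** Dt"
  shows "smooth_part A X lam2 F = lam2 / 2 * (norm (Dt ** F))\<^sup>2 + 1/2 * (norm (F - X))\<^sup>2"
proof -
  have "trace (transpose F ** Ltilde A ** F) = (norm (Dt ** F))\<^sup>2"
    by (simp add: assms power2_norm_eq_inner inner_matrix_mult trace_transpose_mult
        flip: matrix_mul_assoc)
  then show ?thesis
    by (simp add: smooth_part_def)
qed

lemma emp_gradient_step:
  fixes Dt :: "real^'n^'m" and F :: "real^'d^'n"
  assumes "Ltilde A = transpose Dt ** Dt"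
  shows "((1 - gam) *\<^sub>R mat 1 - (gam * lam2) *\<^sub>R Ltilde A) ** F + gam *\<^sub>R X
    = F - gam *\<^sub>R (F + lam2 *\<^sub>R (transpose Dt ** (Dt ** F)) - X)"
proof -
  have "((1 - gam) *\<^sub>R mat 1 - (gam * lam2) *\<^sub>R Ltilde A) ** F
      = (1 - gam) *\<^sub>R F - (gam * lam2) *\<^sub>R (Ltilde A ** F)"
    by (simp only: matrix_diff_rdistrib scalar_matrix_assoc[symmetric] matrix_mul_lid)
  then show ?thesis
    by (simp add: assms matrix_mul_assoc algebra_simps)
qed

lemma emp_converges_to_opt:
  fixes A :: "real^'n^'n" and Delta :: "real^'n^'m" and Xin :: "real^'d^'n"
    and S :: "(real^'d^'m) set"
  assumes adj: "undirected_adj A" and inc: "oriented_incidence A Delta"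
    and S: "compact S" "convex S" "S \<noteq> {}"
    and P: "is_projection_onto P S" and G: "is_support_function G S"
    and lam2: "0 \<le> lam2" and s: "(spec_norm (Deltatilde A Delta))\<^sup>2 \<le> s"
    and steps: "0 < gam" "0 < bet" "gam * (1 + lam2 * s) < 2" "gam * bet * s \<le> 4/3"
  shows "converges_to_opt (\<lambda>k. fst (emp P A Delta Xin lam2 gam bet k))
    (\<lambda>F. G (Deltatilde A Delta ** F) + smooth_part A Xin lam2 F)"
proof -
  let ?Dt = "Deltatilde A Delta"
  have bl: "bounded_linear (\<lambda>F :: real^'d^'n. ?Dt ** F)"
    using linear_matrix_mult by (simp add: linear_conv_bounded_linear)
  have "(onorm (\<lambda>F :: real^'d^'n. ?Dt ** F))\<^sup>2 \<le> s"
    using power_mono[OF onorm_matrix_mult_le onorm_pos_le[OF bl], of 2] s by linarith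
  then interpret primal_dual_iteration "\<lambda>F :: real^'d^'n. ?Dt ** F" S P G Xin lam2 s gam bet
    using S P G lam2 steps
    by unfold_locales (simp_all add: matrix_add_ldistrib matrix_scalar_ac scalar_matrix_assoc[symmetric])
  have gram: "Ltilde A = transpose ?Dt ** ?Dt"
    by (rule Ltilde_eq_transpose_mult[OF adj inc])
  have "emp P A Delta Xin lam2 gam bet k = (step ^^ k) (Xin, 0)" for k
  proof (induction k)
    case (Suc k)
    obtain F Z where FZ: "emp P A Delta Xin lam2 gam bet k = (F, Z)"
      by fastforce
    have "emp P A Delta Xin lam2 gam bet (Suc k) = step (F, Z)"
      using FZ emp_gradient_step[OF gram, of gam lam2 F Xin]
      by (simp add: Let_def hessian_def adjoint_matrix_mult)
    moreover have "(step ^^ k) (Xin, 0) = (F, Z)"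
      using Suc.IH FZ by simp
    ultimately show ?case
      by (simp del: emp.simps)
  qed simp
  moreover have "(\<lambda>F. G (?Dt ** F) + smooth_part A Xin lam2 F) = objective"
    by (simp add: objective_def smooth_part_eq[OF gram] fun_eq_iff)
  ultimately show ?thesis
    using iterates_converge_to_opt by simp
qed

lemma option_I_converges:
  fixes A :: "real^'n^'n" and Delta :: "real^'n^'m" and Xin :: "real^'d^'n"
  assumes adj: "undirected_adj A" and inc: "oriented_incidence A Delta"
    and lam1: "0 \<le> lam1" and lam2: "0 \<le> lam2"
    and s: "(spec_norm (Deltatilde A Delta))\<^sup>2 \<le> s"
    and steps: "0 < gam" "0 < bet" "gam * (1 + lam2 * s) < 2" "gam * bet * s \<le> 4/3"
  shows "converges_to_opt (\<lambda>k. fst (emp (clip_I lam1) A Delta Xin lam2 gam bet k))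
    (obj_I A Delta Xin lam1 lam2)"
proof -
  let ?S = "rowwise (rowwise {-lam1..lam1}) :: (real^'d^'m) set"
  have "0 \<in> ?S"
    using lam1 by (simp add: rowwise_def)
  have "compact ?S"
    by (intro compact_rowwise compact_Icc)
  moreover have "convex ?S"
    by (intro convex_rowwise convex_real_interval)
  moreover have "?S \<noteq> {}"
    using \<open>0 \<in> ?S\<close> by blast
  moreover have "is_projection_onto (clip_I lam1) ?S"
    unfolding clip_I_def[abs_def] by (intro projection_rowwise projection_clip lam1)
  moreover have "is_support_function (\<lambda>V. lam1 * l1_norm V) ?S"
    unfolding l1_norm_def sum_distrib_left
    by (intro support_function_rowwise support_function_abs lam1)
  ultimately show ?thesis
    unfolding obj_I_def[abs_def] by (rule emp_converges_to_opt[OF adj inc _ _ _ _ _ lam2 s steps])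
qed

lemma option_II_converges:
  fixes A :: "real^'n^'n" and Delta :: "real^'n^'m" and Xin :: "real^'d^'n"
  assumes adj: "undirected_adj A" and inc: "oriented_incidence A Delta"
    and lam1: "0 \<le> lam1" and lam2: "0 \<le> lam2"
    and s: "(spec_norm (Deltatilde A Delta))\<^sup>2 \<le> s"
    and steps: "0 < gam" "0 < bet" "gam * (1 + lam2 * s) < 2" "gam * bet * s \<le> 4/3"
  shows "converges_to_opt (\<lambda>k. fst (emp (clip_II lam1) A Delta Xin lam2 gam bet k))
    (obj_II A Delta Xin lam1 lam2)"
proof -
  let ?S = "rowwise (cball 0 lam1) :: (real^'d^'m) set"
  have "0 \<in> ?S"
    using lam1 by (simp add: rowwise_def)
  have "compact ?S"
    by (intro compact_rowwise compact_cball)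
  moreover have "convex ?S"
    by (intro convex_rowwise convex_cball)
  moreover have "?S \<noteq> {}"
    using \<open>0 \<in> ?S\<close> by blast
  moreover have "is_projection_onto (clip_II lam1) ?S"
    unfolding clip_II_def[abs_def] by (intro projection_rowwise projection_ball lam1)
  moreover have "is_support_function (\<lambda>V. lam1 * l21_norm V) ?S"
    unfolding l21_norm_def sum_distrib_left
    by (intro support_function_rowwise support_function_norm lam1)
  ultimately show ?thesis
    unfolding obj_II_def[abs_def] by (rule emp_converges_to_opt[OF adj inc _ _ _ _ _ lam2 s steps])
qed

text \<open>If \<open>\<sigma> = 0\<close> the bound \<open>4 / (3 * gam * \<sigma>)\<close> is \<open>0\<close> (division by zero), so together
  with \<open>bet > 0\<close> it forces \<open>\<sigma> > 0\<close>.\<close>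

lemma step_size_conditions:
  fixes lam2 \<sigma> gam bet :: real
  assumes "0 \<le> lam2" "0 \<le> \<sigma>" "0 < gam" "0 < bet"
    and "gam < 2 / (1 + lam2 * \<sigma>)" "bet \<le> 4 / (3 * gam * \<sigma>)"
  shows "gam * (1 + lam2 * \<sigma>) < 2" and "gam * bet * \<sigma> \<le> 4/3"
proof -
  show "gam * (1 + lam2 * \<sigma>) < 2"
    using assms by (simp add: less_divide_eq add_pos_nonneg)
  have "0 < \<sigma>"
    using assms by (cases "\<sigma> = 0") auto
  then show "gam * bet * \<sigma> \<le> 4/3"
    using assms by (simp add: le_divide_eq algebra_simps)
qed

theorem theorem1:
  fixes A :: "real^'n^'n" and Delta :: "real^'n^'m" and Xin :: "real^'d^'n"
    and lam1 lam2 :: real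
  assumes "undirected_adj A"
    and "oriented_incidence A Delta"
    and "lam1 \<ge> 0" and "lam2 \<ge> 0"
  shows
    "(\<forall>gam bet. gam > 0 \<and> bet > 0 \<and> gam < 2 / (1 + lam2 * spec_norm (Ltilde A))
        \<and> bet \<le> 4 / (3 * gam * spec_norm (Deltatilde A Delta ** transpose (Deltatilde A Delta))) \<longrightarrow>
        converges_to_opt (\<lambda>k. fst (emp (clip_I lam1) A Delta Xin lam2 gam bet k)) (obj_I A Delta Xin lam1 lam2)
      \<and> converges_to_opt (\<lambda>k. fst (emp (clip_II lam1) A Delta Xin lam2 gam bet k)) (obj_II A Delta Xin lam1 lam2))
   \<and> spec_norm (Ltilde A) = spec_norm (transpose (Deltatilde A Delta) ** Deltatilde A Delta)
   \<and> spec_norm (transpose (Deltatilde A Delta) ** Deltatilde A Delta)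
       = spec_norm (Deltatilde A Delta ** transpose (Deltatilde A Delta))
   \<and> spec_norm (Deltatilde A Delta ** transpose (Deltatilde A Delta)) \<le> 2
   \<and> (\<forall>gam bet. gam > 0 \<and> bet > 0 \<and> gam < 2 / (1 + 2 * lam2) \<and> bet \<le> 2 / (3 * gam) \<longrightarrow>
        converges_to_opt (\<lambda>k. fst (emp (clip_I lam1) A Delta Xin lam2 gam bet k)) (obj_I A Delta Xin lam1 lam2)
      \<and> converges_to_opt (\<lambda>k. fst (emp (clip_II lam1) A Delta Xin lam2 gam bet k)) (obj_II A Delta Xin lam1 lam2))"
proof -
  define \<sigma> where "\<sigma> = (spec_norm (Deltatilde A Delta))\<^sup>2"
  have gram: "Ltilde A = transpose (Deltatilde A Delta) ** Deltatilde A Delta"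
    using Ltilde_eq_transpose_mult assms(1,2) .
  have norms: "spec_norm (transpose (Deltatilde A Delta) ** Deltatilde A Delta) = \<sigma>"
      "spec_norm (Deltatilde A Delta ** transpose (Deltatilde A Delta)) = \<sigma>"
    by (simp_all add: \<sigma>_def spec_norm_transpose_mult_self spec_norm_mult_transpose_self)
  have "0 \<le> \<sigma>" and "\<sigma> \<le> 2"
    using spec_norm_Deltatilde_sq_le[OF assms(1,2)] by (simp_all add: \<sigma>_def)
  let ?converges = "\<lambda>gam bet.
    converges_to_opt (\<lambda>k. fst (emp (clip_I lam1) A Delta Xin lam2 gam bet k)) (obj_I A Delta Xin lam1 lam2)
    \<and> converges_to_opt (\<lambda>k. fst (emp (clip_II lam1) A Delta Xin lam2 gam bet k)) (obj_II A Delta Xin lam1 lam2)"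
  have "?converges gam bet"
    if "0 < gam" "0 < bet" "gam < 2 / (1 + lam2 * \<sigma>)" "bet \<le> 4 / (3 * gam * \<sigma>)" for gam bet
    using step_size_conditions[OF assms(4) \<open>0 \<le> \<sigma>\<close> that] that
    by (intro conjI option_I_converges[OF assms] option_II_converges[OF assms])
      (simp_all add: \<sigma>_def)
  moreover have "?converges gam bet"
    if "0 < gam" "0 < bet" "gam < 2 / (1 + 2 * lam2)" "bet \<le> 2 / (3 * gam)" for gam bet
    using step_size_conditions[OF assms(4), of 2 gam bet] that \<open>\<sigma> \<le> 2\<close>
    by (intro conjI option_I_converges[OF assms, of 2] option_II_converges[OF assms, of 2])
      (simp_all add: \<sigma>_def mult.commute)
  ultimately show ?thesis
    unfolding gram norms using \<open>\<sigma> \<le> 2\<close> by blast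
qed

end
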